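(* If $0<|a|<1$ then $a\in\mathcal{E}$. If $1<|a|\le2$ then $a\in\mathcal{B}$. The set $\mathcal{B}$ is bounded.
   Context: $B_a(z)=z^3\frac{z-a}{1-\bar a z}$, with superattracting fixed points $0,\infty$ and basins $A(0),A(\infty)$. For $a\neq0$, $|a|\neq1$, the free critical points are $c_\pm=\frac{a}{3|a|^2}\left(2+|a|^2\pm\sqrt{(|a|^2-4)(|a|^2-1)}\right)$ (square root of a negative $x$ meaning $i\sqrt{-x}$). A parameter $a$ ($|a|\neq1$) is escaping if $c_+\in A(0)\cup A(\infty)$; $\mathcal{E}$ is the set of escaping parameters and $\mathcal{B}$ is the set of non-escaping parameters ($|a|\neq 1$, $c_+\notin A(0)\cup A(\infty)$). *)

theory Defs
  imports "HOL-Analysis.Analysis"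
begin

text \<open>The Riemann sphere is modelled as complex option: None is the point at infinity.\<close>

definition Bl :: "complex \<Rightarrow> complex \<Rightarrow> complex" where
  "Bl a z = z ^ 3 * ((z - a) / (1 - cnj a * z))"

definition Bsph :: "complex \<Rightarrow> complex option \<Rightarrow> complex option" where
  "Bsph a w = (case w of None \<Rightarrow> None
                | Some z \<Rightarrow> (if 1 - cnj a * z = 0 then None else Some (Bl a z)))"

definition basin0 :: "complex \<Rightarrow> complex option set" where
  "basin0 a = {w. \<exists>N. (\<forall>n\<ge>N. (Bsph a ^^ n) w \<noteq> None) \<and>
                     (\<lambda>n. the ((Bsph a ^^ n) w)) \<longlonglongrightarrow> 0}"

definition basinInf :: "complex \<Rightarrow> complex option set" where
  "basinInf a = {w. \<forall>R::real. \<exists>N. \<forall>n\<ge>N.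
        (case (Bsph a ^^ n) w of None \<Rightarrow> True | Some z \<Rightarrow> R < norm z)}"

definition sqrtc :: "real \<Rightarrow> complex" where
  "sqrtc x = (if 0 \<le> x then complex_of_real (sqrt x) else \<i> * complex_of_real (sqrt (- x)))"

definition cplus :: "complex \<Rightarrow> complex" where
  "cplus a = a / (3 * complex_of_real ((norm a)\<^sup>2)) *
     (2 + complex_of_real ((norm a)\<^sup>2) + sqrtc (((norm a)\<^sup>2 - 4) * ((norm a)\<^sup>2 - 1)))"

definition escaping :: "complex set" where
  "escaping = {a. norm a \<noteq> 1 \<and> Some (cplus a) \<in> basin0 a \<union> basinInf a}"

definition nonescaping :: "complex set" where
  "nonescaping = {a. norm a \<noteq> 1 \<and> Some (cplus a) \<notin> basin0 a \<union> basinInf a}"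

end

theory Submission
  imports Defs
begin

text \<open>
  For \<open>0 < |a| < 1\<close> the map \<open>B\<^sub>a\<close> satisfies \<open>|B\<^sub>a z| \<ge> |z|\<^sup>3\<close> outside the unit disc, and a
  direct computation gives \<open>|c\<^sub>+| > 1\<close>, so \<open>c\<^sub>+\<close> escapes to \<open>\<infinity>\<close>. For \<open>1 < |a| \<le> 2\<close> the square
  root is imaginary and \<open>|c\<^sub>+| = 1\<close>; since \<open>B\<^sub>a\<close> is a Blaschke product the unit circle is
  invariant, so the orbit of \<open>c\<^sub>+\<close> neither tends to \<open>0\<close> nor to \<open>\<infinity>\<close>. Finally, for large \<open>|a|\<close>
  the critical point is \<open>c\<^sub>+ = k a\<close> with \<open>k \<approx> 2/3\<close>, its image has modulus of order \<open>|a|\<^sup>2\<close>,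
  and beyond \<open>2|a|\<close> the map at least doubles the modulus; hence \<open>\<B>\<close> is bounded.
\<close>

lemma Bsph_None [simp]: "Bsph a None = None"
  by (simp add: Bsph_def)

lemma Bsph_Some [simp]: "1 - cnj a * z \<noteq> 0 \<Longrightarrow> Bsph a (Some z) = Some (Bl a z)"
  by (simp add: Bsph_def)

lemma norm_Bl: "norm (Bl a z) = norm z ^ 3 * (norm (z - a) / norm (1 - cnj a * z))"
  by (simp add: Bl_def norm_mult norm_divide norm_power)

lemma funpow_Bsph_expanding:
  fixes M c :: real
  assumes M: "0 < M" and c: "1 < c" and z0: "M \<le> norm z0"
    and expand: "\<And>z. M \<le> norm z \<Longrightarrow> 1 - cnj a * z \<noteq> 0 \<Longrightarrow> c * norm z \<le> norm (Bl a z)"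
  shows "case (Bsph a ^^ n) (Some z0) of None \<Rightarrow> True | Some z \<Rightarrow> c ^ n * M \<le> norm z"
proof (induction n)
  case 0
  then show ?case using z0 by simp
next
  case (Suc n)
  show ?case
  proof (cases "(Bsph a ^^ n) (Some z0)")
    case None
    then show ?thesis by simp
  next
    case (Some z)
    with Suc.IH have z: "c ^ n * M \<le> norm z" by simp
    have "M \<le> c ^ n * M" using M c by simp
    show ?thesis
    proof (cases "1 - cnj a * z = 0")
      case True
      then have "Bsph a (Some z) = None" by (simp add: Bsph_def)
      with Some show ?thesis by simp
    next
      case False
      have "c * (c ^ n * M) \<le> c * norm z" using z c by simp
      also have "\<dots> \<le> norm (Bl a z)" using expand False z \<open>M \<le> c ^ n * M\<close> by auto
      finally show ?thesis using Some False by simp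
    qed
  qed
qed

lemma basinInf_if_expanding:
  fixes M c :: real
  assumes M: "0 < M" and c: "1 < c" and z0: "M \<le> norm z0"
    and expand: "\<And>z. M \<le> norm z \<Longrightarrow> 1 - cnj a * z \<noteq> 0 \<Longrightarrow> c * norm z \<le> norm (Bl a z)"
  shows "Some z0 \<in> basinInf a"
  unfolding basinInf_def
proof safe
  fix R :: real
  obtain N where N: "R / M < c ^ N" using real_arch_pow[OF c] by blast
  show "\<exists>N. \<forall>n\<ge>N. case (Bsph a ^^ n) (Some z0) of None \<Rightarrow> True | Some z \<Rightarrow> R < norm z"
  proof (intro exI allI impI)
    fix n assume "N \<le> n"
    then have "R / M < c ^ n" using N c power_increasing[of N n c] by linarith
    then have "R < c ^ n * M" using M by (simp add: pos_divide_less_eq)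
    then show "case (Bsph a ^^ n) (Some z0) of None \<Rightarrow> True | Some z \<Rightarrow> R < norm z"
      using funpow_Bsph_expanding[OF M c z0 expand, of n] by (auto split: option.split)
  qed
qed

lemma basinInf_preimage:
  assumes "Bsph a w \<in> basinInf a"
  shows "w \<in> basinInf a"
  unfolding basinInf_def
proof safe
  fix R :: real
  obtain N where N: "\<forall>n\<ge>N. case (Bsph a ^^ n) (Bsph a w) of None \<Rightarrow> True | Some z \<Rightarrow> R < norm z"
    using assms unfolding basinInf_def by blast
  show "\<exists>N. \<forall>n\<ge>N. case (Bsph a ^^ n) w of None \<Rightarrow> True | Some z \<Rightarrow> R < norm z"
  proof (intro exI allI impI)
    fix n assume "Suc N \<le> n"
    then obtain m where "n = Suc m" "N \<le> m" by (cases n) auto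
    then show "case (Bsph a ^^ n) w of None \<Rightarrow> True | Some z \<Rightarrow> R < norm z"
      using N by (simp add: funpow_Suc_right del: funpow.simps)
  qed
qed

lemma blaschke_norm_identity:
  "(norm (z - a))\<^sup>2 - (norm (1 - cnj a * z))\<^sup>2 = ((norm z)\<^sup>2 - 1) * (1 - (norm a)\<^sup>2)"
  unfolding cmod_power2 by (cases z; cases a) (simp add: power2_eq_square algebra_simps)

lemma Bl_unit_circle:
  assumes z: "norm z = 1" and a: "norm a \<noteq> 1"
  shows "1 - cnj a * z \<noteq> 0" and "norm (Bl a z) = 1"
proof -
  show nz: "1 - cnj a * z \<noteq> 0"
  proof
    assume "1 - cnj a * z = 0"
    then have "norm (cnj a * z) = 1" by simp
    with z a show False by (simp add: norm_mult)
  qed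
  have "(norm (z - a))\<^sup>2 = (norm (1 - cnj a * z))\<^sup>2"
    using blaschke_norm_identity[of z a] z by simp
  then have "norm (z - a) = norm (1 - cnj a * z)"
    using power2_eq_imp_eq norm_ge_zero by blast
  with nz z show "norm (Bl a z) = 1"
    by (simp add: norm_Bl)
qed

lemma funpow_Bsph_unit_circle:
  assumes "norm z0 = 1" "norm a \<noteq> 1"
  shows "\<exists>z. (Bsph a ^^ n) (Some z0) = Some z \<and> norm z = 1"
proof (induction n)
  case 0
  then show ?case using assms by simp
next
  case (Suc n)
  then obtain z where "(Bsph a ^^ n) (Some z0) = Some z" "norm z = 1" by blast
  with Bl_unit_circle[OF _ assms(2)] show ?case by simp
qed

lemma unit_circle_not_in_basins:
  assumes "norm z0 = 1" "norm a \<noteq> 1"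
  shows "Some z0 \<notin> basin0 a \<union> basinInf a"
proof
  have orbit: "norm (the ((Bsph a ^^ n) (Some z0))) = 1" for n
    using funpow_Bsph_unit_circle[OF assms, of n] by auto
  assume "Some z0 \<in> basin0 a \<union> basinInf a"
  then show False
  proof
    assume "Some z0 \<in> basin0 a"
    then have "(\<lambda>n. the ((Bsph a ^^ n) (Some z0))) \<longlonglongrightarrow> 0"
      unfolding basin0_def by blast
    then have "(\<lambda>n. norm (the ((Bsph a ^^ n) (Some z0)))) \<longlonglongrightarrow> 0"
      by (rule tendsto_norm_zero)
    then show False using orbit by (simp add: LIMSEQ_const_iff)
  next
    assume "Some z0 \<in> basinInf a"
    then obtain N where "\<forall>n\<ge>N. case (Bsph a ^^ n) (Some z0) of None \<Rightarrow> True | Some z \<Rightarrow> 1 < norm z"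
      unfolding basinInf_def by blast
    then show False using funpow_Bsph_unit_circle[OF assms, of N] by auto
  qed
qed

lemma norm_Bl_ge_cube:
  assumes "norm a < 1" "1 \<le> norm z" "1 - cnj a * z \<noteq> 0"
  shows "norm z ^ 3 \<le> norm (Bl a z)"
proof -
  have "0 \<le> ((norm z)\<^sup>2 - 1) * (1 - (norm a)\<^sup>2)"
    using assms(1,2) by (intro mult_nonneg_nonneg) (auto simp: one_le_power power_le_one)
  then have "(norm (1 - cnj a * z))\<^sup>2 \<le> (norm (z - a))\<^sup>2"
    using blaschke_norm_identity[of z a] by linarith
  then have "norm (1 - cnj a * z) \<le> norm (z - a)"
    using power2_le_imp_le norm_ge_zero by blast
  then have "1 \<le> norm (z - a) / norm (1 - cnj a * z)"
    using assms(3) by simp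
  then have "norm z ^ 3 * 1 \<le> norm z ^ 3 * (norm (z - a) / norm (1 - cnj a * z))"
    by (intro mult_left_mono) auto
  then show ?thesis
    unfolding norm_Bl by simp
qed

lemma basinInf_if_norm_gt_1:
  assumes a: "norm a < 1" and z0: "1 < norm z0"
  shows "Some z0 \<in> basinInf a"
proof (rule basinInf_if_expanding[where M = "norm z0" and c = "norm z0"])
  fix z assume z: "norm z0 \<le> norm z" "1 - cnj a * z \<noteq> 0"
  have "norm z0 * norm z \<le> norm z * norm z * norm z"
    using z z0 by (intro mult_right_mono) (auto intro: order.trans[OF _ mult_left_mono[of 1]])
  also have "\<dots> \<le> norm (Bl a z)"
    using norm_Bl_ge_cube[OF a _ z(2)] z z0 by (simp add: power3_eq_cube)
  finally show "norm z0 * norm z \<le> norm (Bl a z)" .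
qed (use z0 in auto)

lemma norm_Bl_ge_double:
  assumes a: "2 \<le> norm a" and z: "2 * norm a \<le> norm z" and pole: "1 - cnj a * z \<noteq> 0"
  shows "2 * norm z \<le> norm (Bl a z)"
proof -
  define s t where "s = norm a" and "t = norm z"
  have s: "2 \<le> s" and t: "2 * s \<le> t" "0 < t" using a z by (auto simp: s_def t_def)
  have num: "t / 2 \<le> norm (z - a)"
    using norm_triangle_ineq2[of z a] s t unfolding s_def t_def by linarith
  have "norm (1 - cnj a * z) \<le> 1 + s * t"
    using norm_triangle_ineq4[of 1 "cnj a * z"] by (simp add: norm_mult s_def t_def)
  also have "\<dots> \<le> 2 * s * t"
    using mult_mono[of 1 s 1 t] s t by simp
  finally have "(t / 2) / (2 * s * t) \<le> norm (z - a) / norm (1 - cnj a * z)"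
    using num pole s t by (intro frac_le) auto
  then have quot: "1 / (4 * s) \<le> norm (z - a) / norm (1 - cnj a * z)"
    using t by (simp add: field_simps)
  have "8 * s \<le> 2 * s * (2 * s)"
    using mult_left_mono[OF s, of "4 * s"] s by simp
  also have "\<dots> \<le> t * t"
    using mult_mono[OF t(1) t(1)] s t by simp
  finally have "8 * s \<le> t * t" .
  then have "2 * t \<le> t ^ 3 * (1 / (4 * s))"
    using s t by (simp add: field_simps power3_eq_cube)
  also have "\<dots> \<le> norm (Bl a z)"
    unfolding norm_Bl t_def[symmetric] using quot t by (intro mult_left_mono) auto
  finally show ?thesis by (simp add: t_def)
qed

lemma cplus_eq_real_multiple:
  assumes "0 \<le> ((norm a)\<^sup>2 - 4) * ((norm a)\<^sup>2 - 1)"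
  shows "cplus a = a * of_real ((2 + (norm a)\<^sup>2 + sqrt (((norm a)\<^sup>2 - 4) * ((norm a)\<^sup>2 - 1)))
                                / (3 * (norm a)\<^sup>2))"
  using assms unfolding cplus_def sqrtc_def by simp

lemma norm_cplus_gt_1:
  assumes "0 < norm a" "norm a < 1"
  shows "1 < norm (cplus a)"
proof -
  define s where "s = norm a"
  define q where "q = sqrt ((s\<^sup>2 - 4) * (s\<^sup>2 - 1))"
  have s: "0 < s" "s < 1" using assms by (auto simp: s_def)
  have "s\<^sup>2 < 1" using s by (simp add: power_less_one_iff)
  then have X: "0 \<le> (s\<^sup>2 - 4) * (s\<^sup>2 - 1)"
    by (intro mult_nonpos_nonpos) auto
  have q: "0 \<le> q" using X by (simp add: q_def)
  then have "0 \<le> (2 + s\<^sup>2 + q) / (3 * s\<^sup>2)" by (intro divide_nonneg_nonneg) auto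
  then have "norm (cplus a) = s * ((2 + s\<^sup>2 + q) / (3 * s\<^sup>2))"
    using cplus_eq_real_multiple[OF X[unfolded s_def]]
    by (simp only: norm_mult norm_of_real abs_of_nonneg s_def q_def)
  also have "\<dots> = (2 + s\<^sup>2 + q) / (3 * s)"
    using s by (simp add: power2_eq_square field_simps)
  finally have norm_eq: "norm (cplus a) = (2 + s\<^sup>2 + q) / (3 * s)" .
  have "0 < (1 - s) * (2 - s)" using s by simp
  then have "3 * s < 2 + s\<^sup>2 + q" using q by (simp add: power2_eq_square algebra_simps)
  with s norm_eq show ?thesis by simp
qed

lemma norm_cplus_eq_1:
  assumes "1 < norm a" "norm a \<le> 2"
  shows "norm (cplus a) = 1"
proof -
  define s where "s = norm a"
  define y where "y = sqrt (- ((s\<^sup>2 - 4) * (s\<^sup>2 - 1)))"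
  have s: "1 < s" "s \<le> 2" using assms by (auto simp: s_def)
  have "s\<^sup>2 \<le> 2\<^sup>2" using s by (intro power_mono) auto
  moreover have "1 < s\<^sup>2" using s by simp
  ultimately have X: "(s\<^sup>2 - 4) * (s\<^sup>2 - 1) \<le> 0"
    by (intro mult_nonpos_nonneg) auto
  then have y2: "y\<^sup>2 = - ((s\<^sup>2 - 4) * (s\<^sup>2 - 1))" by (simp add: y_def)
  have "cplus a = a / (3 * of_real (s\<^sup>2)) * Complex (2 + s\<^sup>2) y"
    using X unfolding cplus_def sqrtc_def s_def y_def by (simp add: complex_eq_iff)
  then have "norm (cplus a) = s / (3 * s\<^sup>2) * sqrt ((2 + s\<^sup>2)\<^sup>2 + y\<^sup>2)"
    using s by (simp add: norm_mult norm_divide norm_power complex_norm s_def)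
  also have "(2 + s\<^sup>2)\<^sup>2 + y\<^sup>2 = (3 * s)\<^sup>2"
    unfolding y2 by (simp add: power2_eq_square algebra_simps)
  also have "sqrt ((3 * s)\<^sup>2) = 3 * s" using s by (subst real_sqrt_abs) simp
  finally show ?thesis
    using s by (simp add: power2_eq_square)
qed

lemma cplus_eq_bounded_multiple:
  assumes "64 \<le> norm a"
  obtains k where "3/5 \<le> k" "k \<le> 7/10" "cplus a = a * of_real k"
proof
  define r where "r = (norm a)\<^sup>2"
  define q where "q = sqrt ((r - 4) * (r - 1))"
  have "64\<^sup>2 \<le> r" unfolding r_def using assms by (intro power_mono) auto
  then have r: "4096 \<le> r" by simp
  have X: "0 \<le> (r - 4) * (r - 1)" using r by simp
  then have q2: "q\<^sup>2 = (r - 4) * (r - 1)" "0 \<le> q" by (simp_all add: q_def)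
  have "(r - 4)\<^sup>2 \<le> q\<^sup>2" "q\<^sup>2 \<le> r\<^sup>2"
    unfolding q2 using r by (simp_all add: power2_eq_square algebra_simps)
  then have q: "r - 4 \<le> q" "q \<le> r"
    using q2(2) r by (auto intro: power2_le_imp_le)
  show "3/5 \<le> (2 + r + q) / (3 * r)" using r q by (simp add: le_divide_eq)
  show "(2 + r + q) / (3 * r) \<le> 7/10" using r q by (simp add: divide_le_eq)
  from X show "cplus a = a * of_real ((2 + r + q) / (3 * r))"
    unfolding r_def q_def by (rule cplus_eq_real_multiple)
qed

lemma norm_Bl_bounded_multiple:
  assumes a: "64 \<le> norm a" and k: "3/5 \<le> k" "k \<le> 7/10"
  shows "1 - cnj a * (a * of_real k) \<noteq> 0"
    and "2 * norm a \<le> norm (Bl a (a * of_real k))"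
proof -
  define s where "s = norm a"
  have s: "64 \<le> s" using a by (simp add: s_def)
  have "cnj a * a = of_real (s * s)"
    using complex_norm_square[of a] by (simp add: s_def power2_eq_square mult.commute)
  then have "1 - cnj a * (a * of_real k) = of_real (1 - s * s * k)"
    by (simp add: mult.assoc[symmetric])
  moreover have "s * s * (3/5) \<le> s * s * k" "s * s * k \<le> s * s * (7/10)"
    using k by (intro mult_left_mono; simp)+
  moreover have "64 * 64 \<le> s * s" using mult_mono[OF s s] s by simp
  ultimately have den: "norm (1 - cnj a * (a * of_real k)) = s * s * k - 1"
    and den_pos: "0 < s * s * k - 1" and den_le: "s * s * k - 1 \<le> s * s"
    by (auto simp del: of_real_diff)
  then show pole: "1 - cnj a * (a * of_real k) \<noteq> 0" by auto
  have "norm (a * of_real k) = s * k" using k by (simp add: norm_mult s_def)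
  then have cube: "(3/5 * s) ^ 3 \<le> norm (a * of_real k) ^ 3"
    using k s by (intro power_mono) (auto simp: mult.commute)
  have "a * of_real k - a = a * of_real (k - 1)" by (simp add: algebra_simps)
  then have "norm (a * of_real k - a) = s * \<bar>k - 1\<bar>"
    by (simp only: norm_mult norm_of_real s_def)
  then have "norm (a * of_real k - a) = s * (1 - k)" using k by simp
  then have "(3/10 * s) / (s * s) \<le> norm (a * of_real k - a) / norm (1 - cnj a * (a * of_real k))"
    unfolding den using k s den_pos den_le by (intro frac_le) (auto simp: mult.commute)
  then have quot: "3 / (10 * s) \<le> norm (a * of_real k - a) / norm (1 - cnj a * (a * of_real k))"
    using s by (simp add: field_simps)
  have "2 * s \<le> 81/1250 * (s * s)"
    using mult_right_mono[OF s, of s] s by simp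
  also have "\<dots> = (3/5 * s) ^ 3 * (3 / (10 * s))"
    using s by (simp add: field_simps power3_eq_cube)
  also have "\<dots> \<le> norm (Bl a (a * of_real k))"
    unfolding norm_Bl using cube quot s by (intro mult_mono) auto
  finally show "2 * norm a \<le> norm (Bl a (a * of_real k))" by (simp add: s_def)
qed

lemma basinInf_bounded_multiple:
  assumes a: "64 \<le> norm a" and k: "3/5 \<le> k" "k \<le> 7/10"
  shows "Some (a * of_real k) \<in> basinInf a"
proof (rule basinInf_preimage)
  have "Some (Bl a (a * of_real k)) \<in> basinInf a"
  proof (rule basinInf_if_expanding[where M = "2 * norm a" and c = 2])
    show "2 * norm a \<le> norm (Bl a (a * of_real k))"
      using norm_Bl_bounded_multiple(2)[OF a k] .
  next
    fix z assume "2 * norm a \<le> norm z" "1 - cnj a * z \<noteq> 0"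
    then show "2 * norm z \<le> norm (Bl a z)" using norm_Bl_ge_double a by simp
  qed (use a in auto)
  then show "Bsph a (Some (a * of_real k)) \<in> basinInf a"
    using norm_Bl_bounded_multiple(1)[OF a k] by simp
qed

theorem mainTheorem10:
  shows "(\<forall>a::complex. 0 < norm a \<and> norm a < 1 \<longrightarrow> a \<in> escaping)
       \<and> (\<forall>a::complex. 1 < norm a \<and> norm a \<le> 2 \<longrightarrow> a \<in> nonescaping)
       \<and> bounded nonescaping"
proof (intro conjI allI impI)
  fix a :: complex assume a: "0 < norm a \<and> norm a < 1"
  then have "Some (cplus a) \<in> basinInf a"
    using basinInf_if_norm_gt_1 norm_cplus_gt_1 by blast
  with a show "a \<in> escaping" unfolding escaping_def by simp
next
  fix a :: complex assume a: "1 < norm a \<and> norm a \<le> 2"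
  then have "Some (cplus a) \<notin> basin0 a \<union> basinInf a"
    using unit_circle_not_in_basins norm_cplus_eq_1 by simp
  with a show "a \<in> nonescaping" unfolding nonescaping_def by simp
next
  have "norm a < 64" if a: "a \<in> nonescaping" for a
  proof (rule ccontr)
    assume "\<not> norm a < 64"
    then have big: "64 \<le> norm a" by simp
    then obtain k where "3/5 \<le> k" "k \<le> 7/10" "cplus a = a * of_real k"
      by (rule cplus_eq_bounded_multiple)
    with big have "Some (cplus a) \<in> basinInf a" by (simp add: basinInf_bounded_multiple)
    with a show False unfolding nonescaping_def by simp
  qed
  then show "bounded nonescaping"
    unfolding bounded_iff by (meson less_imp_le)
qed

end
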